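(* Let $H:\mathbb{R}^n\rightrightarrows\mathbb{R}^n$ be a convex process such that $\operatorname{dom}H+\mathcal{R}_-=\mathbb{R}^n$. Then $\mathcal{F}(H)^-\cap\operatorname{cl}(\mathcal{F}(H^+))=\{0\}$ and $\mathcal{F}(H)^-\cap\operatorname{cl}(\mathcal{F}(H^-))=\{0\}$.
   Context: A set-valued map $H:\mathbb{R}^n\rightrightarrows\mathbb{R}^n$ is a convex process (resp. linear process) if its graph $\operatorname{graph}(H)=\{(x,y)\mid y\in H(x)\}$ is a convex cone (resp. a subspace); $\operatorname{dom}(H)=\{x\mid H(x)\neq\emptyset\}$. For a set-valued map $G$, a trajectory is a sequence $(x_k)_{k\ge0}$ with $x_{k+1}\in G(x_k)$ for all $k\ge0$; the feasible set $\mathcal{F}(G)$ is the set of all $\xi$ such that there is a trajectory with $x_0=\xi$. A $q$-step trajectory is a finite sequence $(x_k)_{k=0}^q$ with $x_{k+1}\in G(x_k)$ for $0\le k<q$; the reachable set $\mathcal{R}(G)$ is the set of all $\xi$ for which there exist $q\ge 0$ and a $q$-step trajectory with $x_0=0$, $x_q=\xi$. For a convex process $H$, $L_-$ is the linear process with $\operatorname{graph}(L_-)=\operatorname{graph}(H)\cap(-\operatorname{graph}(H))$, and $\mathcal{R}_-:=\mathcal{R}(L_-)$. For a set $\mathcal{C}$, its negative polar cone is $\mathcal{C}^-=\{y\mid\langle x,y\rangle\le0\ \forall x\in\mathcal{C}\}$. The negative and positive dual processes are defined by $p\in H^-(q)\iff\langle p,x\rangle\ge\langle q,y\rangle$ for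 all $(x,y)\in\operatorname{graph}(H)$, and $p\in H^+(q)\iff\langle p,x\rangle\le\langle q,y\rangle$ for all $(x,y)\in\operatorname{graph}(H)$. $\operatorname{cl}$ denotes closure. *)

theory Defs
  imports "HOL-Analysis.Analysis"
begin

definition graph :: "('a \<Rightarrow> 'a set) \<Rightarrow> ('a \<times> 'a) set" where
  "graph H = {(x, y). y \<in> H x}"

definition sv_dom :: "('a \<Rightarrow> 'a set) \<Rightarrow> 'a set" where
  "sv_dom H = {x. H x \<noteq> {}}"

definition convex_process :: "('a::real_vector \<Rightarrow> 'a set) \<Rightarrow> bool" where
  "convex_process H \<longleftrightarrow> convex (graph H) \<and> cone (graph H)"

definition linear_process :: "('a::real_vector \<Rightarrow> 'a set) \<Rightarrow> bool" where
  "linear_process H \<longleftrightarrow> subspace (graph H)"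

definition feasible_set :: "('a \<Rightarrow> 'a set) \<Rightarrow> 'a set" where
  "feasible_set G = {\<xi>. \<exists>x::nat \<Rightarrow> 'a. x 0 = \<xi> \<and> (\<forall>k. x (Suc k) \<in> G (x k))}"

definition reachable_set :: "('a::zero \<Rightarrow> 'a set) \<Rightarrow> 'a set" where
  "reachable_set G = {\<xi>. \<exists>(q::nat) (x::nat \<Rightarrow> 'a). x 0 = 0 \<and> x q = \<xi> \<and>
                          (\<forall>k<q. x (Suc k) \<in> G (x k))}"

definition L_minus :: "('a::real_vector \<Rightarrow> 'a set) \<Rightarrow> 'a \<Rightarrow> 'a set" where
  "L_minus H = (\<lambda>x. {y. (x, y) \<in> graph H \<and> (-x, -y) \<in> graph H})"

definition R_minus :: "('a::real_vector \<Rightarrow> 'a set) \<Rightarrow> 'a set" where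
  "R_minus H = reachable_set (L_minus H)"

definition neg_polar :: "'a::real_inner set \<Rightarrow> 'a set" where
  "neg_polar C = {y. \<forall>x\<in>C. inner x y \<le> 0}"

definition neg_dual :: "('a::real_inner \<Rightarrow> 'a set) \<Rightarrow> 'a \<Rightarrow> 'a set" where
  "neg_dual H = (\<lambda>q. {p. \<forall>(x, y)\<in>graph H. inner p x \<ge> inner q y})"

definition pos_dual :: "('a::real_inner \<Rightarrow> 'a set) \<Rightarrow> 'a \<Rightarrow> 'a set" where
  "pos_dual H = (\<lambda>q. {p. \<forall>(x, y)\<in>graph H. inner p x \<le> inner q y})"

end

theory Submission
  imports Defs
begin

text \<open>
  Trajectories of \<open>H\<^sup>+\<close> and of \<open>H\<^sup>-\<close> are orthogonal to \<open>\<R>\<^sub>-\<close>, since along a step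
  of \<open>L\<^sub>-\<close> both defining inequalities of the dual processes hold with equality; so is
  their closure. Conversely, \<open>dom H + \<R>\<^sub>- = \<real>\<^sup>n\<close> lifts to \<open>\<F>(H) + \<R>\<^sub>- = \<real>\<^sup>n\<close>:
  from any point move by some \<open>r\<^sub>j \<in> \<R>\<^sub>-\<close> into \<open>dom H\<close> and take a step of \<open>H\<close>, and
  cancel each such move by an \<open>L\<^sub>-\<close>-trajectory of a fixed length \<open>N\<close> started \<open>N\<close> steps
  earlier; a uniform \<open>N\<close> exists because \<open>\<R>\<^sub>-\<close> is the union of an increasing chain of
  subspaces of \<open>\<real>\<^sup>n\<close>. A vector of \<open>\<F>(H)\<^sup>-\<close> orthogonal to \<open>\<R>\<^sub>-\<close> is then nonpositive
  on all of \<open>\<real>\<^sup>n\<close>, hence zero.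
\<close>

lemma mem_graph_iff: "(x, y) \<in> graph H \<longleftrightarrow> y \<in> H x"
  by (simp add: graph_def)

lemma convex_process_add:
  assumes "convex_process H" "y \<in> H x" "y' \<in> H x'"
  shows "y + y' \<in> H (x + x')"
proof -
  have "\<forall>u\<in>graph H. \<forall>v\<in>graph H. u + v \<in> graph H"
    using assms(1) convex_cone[of "graph H"] by (simp add: convex_process_def)
  then have "(x, y) + (x', y') \<in> graph H"
    using assms(2,3) by (simp only: mem_graph_iff[symmetric])
  then show ?thesis by (simp add: mem_graph_iff)
qed

lemma L_minus_iff: "y \<in> L_minus H x \<longleftrightarrow> y \<in> H x \<and> -y \<in> H (-x)"
  by (simp add: L_minus_def mem_graph_iff)

lemma graph_L_minus: "graph (L_minus H) = graph H \<inter> uminus -` graph H"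
  by (auto simp: graph_def L_minus_def)

lemma subspace_convex_cone_Int_uminus:
  assumes "convex_cone S"
  shows "subspace (S \<inter> uminus -` S)"
proof -
  have add: "x + y \<in> S" if "x \<in> S" "y \<in> S" for x y
    using assms that by (simp add: convex_cone_iff)
  have scale: "c *\<^sub>R x \<in> S" if "x \<in> S" "c \<ge> 0" for x c
    using assms that by (simp add: convex_cone_iff)
  have "c *\<^sub>R x \<in> S \<and> -(c *\<^sub>R x) \<in> S" if "x \<in> S" "-x \<in> S" for c x
    using scale[OF that(1), of c] scale[OF that(1), of "-c"] scale[OF that(2), of c]
      scale[OF that(2), of "-c"]
    by (cases "c \<ge> 0") auto
  moreover have "-x - y \<in> S" if "-x \<in> S" "-y \<in> S" for x y
    using add[OF that] by simp
  ultimately show ?thesis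
    unfolding subspace_def using add assms by (auto simp: convex_cone_contains_0)
qed

lemma linear_process_L_minus:
  assumes "convex_process H" "sv_dom H \<noteq> {}"
  shows "linear_process (L_minus H)"
proof -
  have "graph H \<noteq> {}"
    using assms(2) by (auto simp: sv_dom_def graph_def)
  then have "convex_cone (graph H)"
    using assms(1) unfolding convex_process_def convex_cone_def conic_def cone_def by blast
  then show ?thesis
    unfolding linear_process_def graph_L_minus by (rule subspace_convex_cone_Int_uminus)
qed

lemma linear_process_zero: "linear_process L \<Longrightarrow> 0 \<in> L 0"
  by (metis mem_graph_iff linear_process_def subspace_0 zero_prod_def)

lemma linear_process_add: "linear_process L \<Longrightarrow> y \<in> L x \<Longrightarrow> y' \<in> L x' \<Longrightarrow> y + y' \<in> L (x + x')"
  by (metis mem_graph_iff linear_process_def subspace_add add_Pair)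

lemma linear_process_scaleR: "linear_process L \<Longrightarrow> y \<in> L x \<Longrightarrow> c *\<^sub>R y \<in> L (c *\<^sub>R x)"
  by (metis mem_graph_iff linear_process_def subspace_scale scaleR_Pair)

lemma linear_process_sum:
  assumes "linear_process L" "\<And>i. i \<in> A \<Longrightarrow> g i \<in> L (f i)"
  shows "sum g A \<in> L (sum f A)"
proof -
  have "(\<Sum>i\<in>A. (f i, g i)) \<in> graph L"
    using assms by (intro subspace_sum) (auto simp: linear_process_def mem_graph_iff)
  moreover have "(\<Sum>i\<in>A. (f i, g i)) = (sum f A, sum g A)"
    by (simp add: prod_eq_iff fst_sum snd_sum)
  ultimately show ?thesis
    by (simp add: mem_graph_iff)
qed

definition reachable_in_steps :: "('a::zero \<Rightarrow> 'a set) \<Rightarrow> nat \<Rightarrow> 'a set" where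
  "reachable_in_steps G q = {\<xi>. \<exists>x. x 0 = 0 \<and> x q = \<xi> \<and> (\<forall>k<q. x (Suc k) \<in> G (x k))}"

lemma reachable_set_eq_UN: "reachable_set G = (\<Union>q. reachable_in_steps G q)"
  unfolding reachable_set_def reachable_in_steps_def by blast

lemma reachable_in_steps_0 [simp]: "reachable_in_steps G 0 = {0}"
  unfolding reachable_in_steps_def by auto

lemma reachable_in_steps_Suc:
  "\<xi> \<in> reachable_in_steps G (Suc q) \<longleftrightarrow> (\<exists>\<eta>\<in>reachable_in_steps G q. \<xi> \<in> G \<eta>)"
proof
  assume "\<xi> \<in> reachable_in_steps G (Suc q)"
  then obtain x where "x 0 = 0" "x (Suc q) = \<xi>" "\<forall>k<Suc q. x (Suc k) \<in> G (x k)"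
    unfolding reachable_in_steps_def by blast
  then have "x q \<in> reachable_in_steps G q" "\<xi> \<in> G (x q)"
    unfolding reachable_in_steps_def by auto
  then show "\<exists>\<eta>\<in>reachable_in_steps G q. \<xi> \<in> G \<eta>" ..
next
  assume "\<exists>\<eta>\<in>reachable_in_steps G q. \<xi> \<in> G \<eta>"
  then obtain x where "x 0 = 0" "\<xi> \<in> G (x q)" "\<forall>k<q. x (Suc k) \<in> G (x k)"
    unfolding reachable_in_steps_def by auto
  then show "\<xi> \<in> reachable_in_steps G (Suc q)"
    unfolding reachable_in_steps_def by (auto intro!: exI[of _ "x(Suc q := \<xi>)"] simp: less_Suc_eq)
qed

lemma reachable_in_steps_mono:
  assumes "0 \<in> G 0" "q \<le> p"
  shows "reachable_in_steps G q \<subseteq> reachable_in_steps G p"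
proof -
  have "reachable_in_steps G q \<subseteq> reachable_in_steps G (Suc q)" for q
  proof (induction q)
    case 0
    then show ?case using assms(1) by (auto simp: reachable_in_steps_Suc)
  next
    case (Suc q)
    show ?case
    proof
      fix \<xi> assume "\<xi> \<in> reachable_in_steps G (Suc q)"
      then obtain \<eta> where "\<eta> \<in> reachable_in_steps G q" "\<xi> \<in> G \<eta>"
        by (auto simp: reachable_in_steps_Suc)
      then show "\<xi> \<in> reachable_in_steps G (Suc (Suc q))"
        using Suc.IH by (auto simp: reachable_in_steps_Suc[of _ _ "Suc q"])
    qed
  qed
  then show ?thesis
    using lift_Suc_mono_le[of "reachable_in_steps G"] assms(2) by blast
qed

lemma subspace_reachable_in_steps:
  assumes "linear_process L"
  shows "subspace (reachable_in_steps L q)"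
proof (induction q)
  case 0
  then show ?case by (simp add: subspace_single_0)
next
  case (Suc q)
  show ?case
  proof (rule subspaceI, unfold reachable_in_steps_Suc)
    show "\<exists>\<eta>\<in>reachable_in_steps L q. 0 \<in> L \<eta>"
      using Suc.IH linear_process_zero[OF assms] subspace_0 by blast
  next
    fix \<xi> \<xi>' assume "\<exists>\<eta>\<in>reachable_in_steps L q. \<xi> \<in> L \<eta>" "\<exists>\<eta>\<in>reachable_in_steps L q. \<xi>' \<in> L \<eta>"
    then show "\<exists>\<eta>\<in>reachable_in_steps L q. \<xi> + \<xi>' \<in> L \<eta>"
      using Suc.IH linear_process_add[OF assms] subspace_add by blast
  next
    fix c \<xi> assume "\<exists>\<eta>\<in>reachable_in_steps L q. \<xi> \<in> L \<eta>"
    then show "\<exists>\<eta>\<in>reachable_in_steps L q. c *\<^sub>R \<xi> \<in> L \<eta>"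
      using Suc.IH linear_process_scaleR[OF assms] subspace_scale by blast
  qed
qed

lemma reachable_set_eq_reachable_in_steps:
  fixes L :: "'a::euclidean_space \<Rightarrow> 'a set"
  assumes "linear_process L"
  obtains N where "reachable_set L = reachable_in_steps L N"
proof -
  obtain B where B: "B \<subseteq> reachable_set L" "independent B" "reachable_set L \<subseteq> span B"
    by (meson basis_exists)
  have "finite B"
    using B(2) finiteI_independent by blast
  have "\<forall>b\<in>B. \<exists>q. b \<in> reachable_in_steps L q"
    using B(1) by (auto simp: reachable_set_eq_UN)
  then obtain steps where steps: "\<And>b. b \<in> B \<Longrightarrow> b \<in> reachable_in_steps L (steps b)"
    by metis
  define N where "N = sum steps B"
  have "b \<in> reachable_in_steps L N" if "b \<in> B" for b
  proof -
    have "steps b \<le> N"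
      unfolding N_def by (metis \<open>finite B\<close> le0 member_le_sum that)
    then show ?thesis
      using steps[OF that] reachable_in_steps_mono[of L, OF linear_process_zero[OF assms]] by blast
  qed
  then have "span B \<subseteq> reachable_in_steps L N"
    using span_minimal[OF _ subspace_reachable_in_steps[OF assms]] by blast
  moreover have "reachable_in_steps L N \<subseteq> reachable_set L"
    by (auto simp: reachable_set_eq_UN)
  ultimately have "reachable_set L = reachable_in_steps L N"
    using B(3) by blast
  then show ?thesis ..
qed

lemma correction_sequence_exists:
  assumes L: "linear_process L" and r: "\<And>j. r j \<in> reachable_in_steps L N"
  obtains s where "s 0 \<in> reachable_in_steps L N" "\<And>j. s (Suc j) \<in> L (s j - r j)"
proof -
  have "\<forall>j. \<exists>w. w 0 = 0 \<and> w N = r j \<and> (\<forall>i<N. w (Suc i) \<in> L (w i))"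
    using r unfolding reachable_in_steps_def by blast
  then obtain W where W0: "\<And>j. W j 0 = 0" and WN: "\<And>j. W j N = r j"
    and W_step: "\<And>j i. i < N \<Longrightarrow> W j (Suc i) \<in> L (W j i)"
    by metis
  \<comment> \<open>the sum of the states at time \<open>j\<close> of the trajectories \<open>W k\<close>, \<open>j \<le> k \<le> j + N\<close>,
    where \<open>W k\<close> starts at time \<open>k - N\<close> and reaches \<open>r k\<close> at time \<open>k\<close>\<close>
  define s where "s j = (\<Sum>i<Suc N. W (j + N - i) i)" for j
  have W_reachable: "W j i \<in> reachable_in_steps L N" if "i \<le> N" for j i
  proof -
    have "W j i \<in> reachable_in_steps L i"
      unfolding reachable_in_steps_def using W0 W_step that by (auto intro!: exI[of _ "W j"])
    then show ?thesis
      using reachable_in_steps_mono[of L, OF linear_process_zero[OF L] that] by blast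
  qed
  have "s 0 \<in> reachable_in_steps L N"
    unfolding s_def
    by (intro subspace_sum[OF subspace_reachable_in_steps[OF L]]) (simp add: W_reachable)
  moreover have "s (Suc j) \<in> L (s j - r j)" for j
  proof -
    have "s j - r j = (\<Sum>i<N. W (j + N - i) i)"
      by (simp add: s_def WN)
    moreover have "s (Suc j) = (\<Sum>i<N. W (j + N - i) (Suc i))"
      unfolding s_def by (subst sum.lessThan_Suc_shift) (simp add: W0)
    ultimately show ?thesis
      by (auto intro: linear_process_sum[OF L] W_step)
  qed
  ultimately show ?thesis ..
qed

lemma zero_in_feasible_set: "0 \<in> G 0 \<Longrightarrow> 0 \<in> feasible_set G"
  unfolding feasible_set_def by (auto intro!: exI[of _ "\<lambda>_. 0"])

lemma feasible_point_in_coset: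
  assumes H: "convex_process H" and L: "linear_process (L_minus H)"
    and shift: "\<And>z. shift z \<in> reachable_in_steps (L_minus H) N"
    and succ: "\<And>z. succ z \<in> H (z - shift z)"
  obtains x0 where "x0 \<in> feasible_set H" "z - x0 \<in> reachable_in_steps (L_minus H) N"
proof -
  define u where "u = rec_nat z (\<lambda>_. succ)"
  obtain s where s0: "s 0 \<in> reachable_in_steps (L_minus H) N"
    and s_step: "\<And>j. s (Suc j) \<in> L_minus H (s j - shift (u j))"
    using correction_sequence_exists[OF L, of "\<lambda>j. shift (u j)", OF shift] by blast
  define x where "x j = u j - s j" for j
  have "x (Suc j) \<in> H (x j)" for j
  proof -
    have "- s (Suc j) \<in> H (- (s j - shift (u j)))"
      using s_step[of j] by (simp only: L_minus_iff)
    then have "succ (u j) + - s (Suc j) \<in> H (u j - shift (u j) + - (s j - shift (u j)))"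
      by (rule convex_process_add[OF H succ])
    moreover have "succ (u j) + - s (Suc j) = x (Suc j)"
      by (simp add: x_def u_def)
    ultimately show ?thesis
      by (simp add: x_def)
  qed
  then have "x 0 \<in> feasible_set H"
    unfolding feasible_set_def by blast
  moreover have "z - x 0 \<in> reachable_in_steps (L_minus H) N"
    using s0 by (simp add: x_def u_def)
  ultimately show ?thesis
    by (rule that)
qed

lemma feasible_set_plus_R_minus_eq_UNIV:
  fixes H :: "'a::euclidean_space \<Rightarrow> 'a set"
  assumes H: "convex_process H"
    and dom: "{a + b | a b. a \<in> sv_dom H \<and> b \<in> R_minus H} = UNIV"
  shows "{a + b | a b. a \<in> feasible_set H \<and> b \<in> R_minus H} = UNIV"
proof -
  have "sv_dom H \<noteq> {}"
    using dom by blast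
  then have L: "linear_process (L_minus H)"
    using linear_process_L_minus[OF H] by blast
  then obtain N where N: "R_minus H = reachable_in_steps (L_minus H) N"
    unfolding R_minus_def by (rule reachable_set_eq_reachable_in_steps)
  have "\<forall>z. \<exists>r y. r \<in> R_minus H \<and> y \<in> H (z - r)"
  proof
    fix z :: 'a
    obtain a r where "z = a + r" "a \<in> sv_dom H" "r \<in> R_minus H"
      using dom by blast
    moreover obtain y where "y \<in> H a"
      using \<open>a \<in> sv_dom H\<close> by (auto simp: sv_dom_def)
    ultimately show "\<exists>r y. r \<in> R_minus H \<and> y \<in> H (z - r)"
      by (metis add_diff_cancel_right')
  qed
  then obtain shift succ where shift: "\<And>z. shift z \<in> reachable_in_steps (L_minus H) N"
    and succ: "\<And>z. succ z \<in> H (z - shift z)"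
    unfolding N by metis
  have "z \<in> {a + b | a b. a \<in> feasible_set H \<and> b \<in> R_minus H}" for z
  proof -
    obtain x0 where "x0 \<in> feasible_set H" "z - x0 \<in> R_minus H"
      using feasible_point_in_coset[OF H L shift succ] unfolding N by blast
    then have "z = x0 + (z - x0) \<and> x0 \<in> feasible_set H \<and> z - x0 \<in> R_minus H"
      by simp
    then show ?thesis
      by blast
  qed
  then show ?thesis
    by blast
qed

lemma feasible_set_orthogonal_reachable_set:
  fixes G L :: "'a::real_inner \<Rightarrow> 'a set"
  assumes adjoint: "\<And>q p x y. p \<in> G q \<Longrightarrow> y \<in> L x \<Longrightarrow> inner p x = inner q y"
    and "p0 \<in> feasible_set G" "\<xi> \<in> reachable_set L"
  shows "inner p0 \<xi> = 0"
proof -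
  have "inner (p 0) \<xi> = 0"
    if "\<xi> \<in> reachable_in_steps L n" "\<forall>k. p (Suc k) \<in> G (p k)" for n \<xi> p
    using that
  proof (induction n arbitrary: \<xi> p)
    case 0
    then show ?case by simp
  next
    case (Suc n)
    then obtain \<eta> where "\<eta> \<in> reachable_in_steps L n" "\<xi> \<in> L \<eta>"
      by (auto simp: reachable_in_steps_Suc)
    then have "inner (p 0) \<xi> = inner (p 1) \<eta>"
      using adjoint Suc.prems(2) by (metis One_nat_def)
    also have "\<dots> = 0"
      using Suc.IH[of \<eta> "p \<circ> Suc"] \<open>\<eta> \<in> reachable_in_steps L n\<close> Suc.prems(2) by simp
    finally show ?case .
  qed
  then show ?thesis
    using assms(2,3) unfolding feasible_set_def reachable_set_eq_UN by blast
qed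

lemma pos_dual_adjoint_L_minus:
  assumes "p \<in> pos_dual H q" "y \<in> L_minus H x"
  shows "inner p x = inner q y"
proof -
  have "inner p x \<le> inner q y" "inner p (-x) \<le> inner q (-y)"
    using assms unfolding pos_dual_def L_minus_def by auto
  then show ?thesis by simp
qed

lemma neg_dual_adjoint_L_minus:
  assumes "p \<in> neg_dual H q" "y \<in> L_minus H x"
  shows "inner p x = inner q y"
proof -
  have "inner p x \<ge> inner q y" "inner p (-x) \<ge> inner q (-y)"
    using assms unfolding neg_dual_def L_minus_def by auto
  then show ?thesis by simp
qed

lemma zero_in_pos_dual: "0 \<in> pos_dual H 0"
  by (simp add: pos_dual_def)

lemma zero_in_neg_dual: "0 \<in> neg_dual H 0"
  by (simp add: neg_dual_def)

lemma neg_polar_Int_closure_eq_zero: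
  fixes F P V :: "'a::real_inner set"
  assumes sum: "{a + b | a b. a \<in> F \<and> b \<in> V} = UNIV"
    and orthogonal: "\<And>p v. p \<in> P \<Longrightarrow> v \<in> V \<Longrightarrow> inner p v = 0"
    and "0 \<in> P"
  shows "neg_polar F \<inter> closure P = {0}"
proof
  show "{0} \<subseteq> neg_polar F \<inter> closure P"
    using \<open>0 \<in> P\<close> closure_subset by (auto simp: neg_polar_def)
next
  show "neg_polar F \<inter> closure P \<subseteq> {0}"
  proof
    fix q assume q: "q \<in> neg_polar F \<inter> closure P"
    have "closure P \<subseteq> (\<Inter>v\<in>V. {p. inner v p = 0})"
      using orthogonal by (intro closure_minimal closed_INT ballI closed_hyperplane)
        (auto simp: inner_commute)
    then have q_orth: "inner v q = 0" if "v \<in> V" for v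
      using q that by blast
    obtain a v where "q = a + v" "a \<in> F" "v \<in> V"
      using sum by blast
    then have "inner q q = inner a q + inner v q"
      by (simp add: inner_add_left)
    also have "\<dots> = inner a q"
      using q_orth[OF \<open>v \<in> V\<close>] by simp
    also have "\<dots> \<le> 0"
      using q \<open>a \<in> F\<close> by (auto simp: neg_polar_def)
    finally have "inner q q \<le> 0" .
    then show "q \<in> {0}"
      using inner_ge_zero[of q] by (simp add: order_antisym)
  qed
qed

lemma neg_polar_feasible_set_Int_closure_eq_zero:
  fixes H G :: "'a::euclidean_space \<Rightarrow> 'a set"
  assumes "convex_process H"
    and "{a + b | a b. a \<in> sv_dom H \<and> b \<in> R_minus H} = UNIV"
    and "\<And>q p x y. p \<in> G q \<Longrightarrow> y \<in> L_minus H x \<Longrightarrow> inner p x = inner q y"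
    and "0 \<in> G 0"
  shows "neg_polar (feasible_set H) \<inter> closure (feasible_set G) = {0}"
proof (rule neg_polar_Int_closure_eq_zero[OF feasible_set_plus_R_minus_eq_UNIV[OF assms(1,2)]])
  show "inner p v = 0" if "p \<in> feasible_set G" "v \<in> R_minus H" for p v
    using assms(3) that unfolding R_minus_def by (rule feasible_set_orthogonal_reachable_set)
  show "0 \<in> feasible_set G"
    using assms(4) by (rule zero_in_feasible_set)
qed

theorem lemma2:
  fixes H :: "real ^ 'n \<Rightarrow> (real ^ 'n) set"
  assumes "convex_process H"
    and "{a + b | a b. a \<in> sv_dom H \<and> b \<in> R_minus H} = UNIV"
  shows "neg_polar (feasible_set H) \<inter> closure (feasible_set (pos_dual H)) = {0} \<and>
         neg_polar (feasible_set H) \<inter> closure (feasible_set (neg_dual H)) = {0}"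
proof
  show "neg_polar (feasible_set H) \<inter> closure (feasible_set (pos_dual H)) = {0}"
    by (rule neg_polar_feasible_set_Int_closure_eq_zero[OF assms])
      (blast intro: pos_dual_adjoint_L_minus zero_in_pos_dual)+
  show "neg_polar (feasible_set H) \<inter> closure (feasible_set (neg_dual H)) = {0}"
    by (rule neg_polar_feasible_set_Int_closure_eq_zero[OF assms])
      (blast intro: neg_dual_adjoint_L_minus zero_in_neg_dual)+
qed

end
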